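(* Let $\Gamma$ be an alphabet and let $P_0,P_1,\dots,P_d$ be nonempty strings over $\Gamma$ such that $P_{j-1}$ is a prefix of $P_j$ for every $j\in\{1,\dots,d\}$. For a finite multiset $\mathcal{D}$ of strings over $\Gamma$ define \[ \Delta_{\mathcal{D}}=\big(\mathrm{freq}_{\mathcal{D}}(P_0),\ \mathrm{freq}_{\mathcal{D}}(P_1)-\mathrm{freq}_{\mathcal{D}}(P_0),\ \dots,\ \mathrm{freq}_{\mathcal{D}}(P_d)-\mathrm{freq}_{\mathcal{D}}(P_{d-1})\big)\in\mathbb{Z}^{d+1}. \] Let $S\in\mathcal{D}$, let $S'$ be any string over $\Gamma$, and let $\mathcal{D}'=(\mathcal{D}\setminus\{S\})\cup\{S'\}$ (one copy of $S$ replaced by $S'$). Then \[ \|\Delta_{\mathcal{D}}-\Delta_{\mathcal{D}'}\|_1\le 2\max\{\mathrm{freq}_S(P_0),\ \mathrm{freq}_{S'}(P_0)\}. \]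
   Context: For strings $P,S$, $\mathrm{freq}_S(P)$ is the number of positions $i$ with $S[i\ldots i+|P|-1]=P$, and for a multiset $\mathcal{D}$, $\mathrm{freq}_{\mathcal{D}}(P)=\sum_{S\in\mathcal{D}}\mathrm{freq}_S(P)$ (with multiplicity). In the paper, $P_0,\dots,P_d$ are the path labels of the nodes along a heavy path (from its head downward) in a trie-like candidate tree, so consecutive labels are prefixes of one another. *)

theory Defs
  imports Main "HOL-Library.Multiset" "HOL-Library.Sublist"
begin

definition freq :: "'a list \<Rightarrow> 'a list \<Rightarrow> nat" where
  "freq S P = card {i. i + length P \<le> length S \<and> take (length P) (drop i S) = P}"

definition freqD :: "'a list multiset \<Rightarrow> 'a list \<Rightarrow> nat" where
  "freqD D P = (\<Sum>S\<in>#D. freq S P)"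

definition delta :: "'a list multiset \<Rightarrow> (nat \<Rightarrow> 'a list) \<Rightarrow> nat \<Rightarrow> int" where
  "delta D P j = (if j = 0 then int (freqD D (P 0))
                  else int (freqD D (P j)) - int (freqD D (P (j - 1))))"

end

theory Submission
  imports Defs
begin

text \<open>The vector Delta is additive in the multiset, so replacing S by S' changes it by
  Delta({S}) - Delta({S'}). Along a prefix chain the frequencies in a single string are
  antitone, so all components of Delta({S}) but the first are nonpositive and their absolute
  values telescope to freq S (P 0) - freq S (P d) \<le> freq S (P 0). The triangle inequality
  then bounds the l1-distance by |a - b| + a + b = 2 max a b, where a and b are the
  frequencies of P 0 in S and S'.\<close>

lemma freq_antimono_prefix:
  assumes "prefix p q"
  shows "freq S q \<le> freq S p"
  unfolding freq_def
proof (rule card_mono)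
  show "finite {i. i + length p \<le> length S \<and> take (length p) (drop i S) = p}"
    by (rule finite_subset[of _ "{..length S}"]) auto
  obtain r where q: "q = p @ r"
    using assms prefix_def by blast
  show "{i. i + length q \<le> length S \<and> take (length q) (drop i S) = q}
        \<subseteq> {i. i + length p \<le> length S \<and> take (length p) (drop i S) = p}"
  proof (intro subsetI CollectI)
    fix i assume "i \<in> {i. i + length q \<le> length S \<and> take (length q) (drop i S) = q}"
    then have len: "i + length q \<le> length S" and occ: "take (length q) (drop i S) = q"
      by auto
    have "take (length p) (drop i S) = take (length p) (take (length q) (drop i S))"
      using q by (simp add: min_def)
    also have "\<dots> = p"
      using occ q by simp
    finally show "i + length p \<le> length S \<and> take (length p) (drop i S) = p"
      using len q by simp
  qed
qed

lemma freqD_union: "freqD (D + E) p = freqD D p + freqD E p"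
  by (simp add: freqD_def)

lemma delta_union: "delta (D + E) P j = delta D P j + delta E P j"
  by (simp add: delta_def freqD_union)

lemma delta_singleton:
  "delta {#S#} P j =
     (if j = 0 then int (freq S (P 0)) else int (freq S (P j)) - int (freq S (P (j - 1))))"
  by (simp add: delta_def freqD_def)

lemma delta_diff_replace:
  assumes "S \<in># D"
  shows "delta D P j - delta (add_mset S' (D - {#S#})) P j = delta {#S#} P j - delta {#S'#} P j"
proof -
  have "D = (D - {#S#}) + {#S#}"
    using assms by simp
  then have "delta D P j = delta (D - {#S#}) P j + delta {#S#} P j"
    by (metis delta_union)
  moreover have "delta (add_mset S' (D - {#S#})) P j = delta (D - {#S#}) P j + delta {#S'#} P j"
    by (metis delta_union add_mset_add_single)
  ultimately show ?thesis
    by simp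
qed

lemma sum_abs_diff_increments_antimono:
  fixes a b :: "nat \<Rightarrow> int"
  assumes "\<And>j. j \<in> {1..d} \<Longrightarrow> a j \<le> a (j - 1)"
    and "\<And>j. j \<in> {1..d} \<Longrightarrow> b j \<le> b (j - 1)"
  shows "(\<Sum>j\<in>{1..d}. \<bar>(a j - a (j - 1)) - (b j - b (j - 1))\<bar>) \<le> (a 0 - a d) + (b 0 - b d)"
  using assms
proof (induction d)
  case 0
  then show ?case by simp
next
  case (Suc d)
  have "(\<Sum>j\<in>{1..d}. \<bar>(a j - a (j - 1)) - (b j - b (j - 1))\<bar>) \<le> (a 0 - a d) + (b 0 - b d)"
    using Suc.prems by (intro Suc.IH) auto
  moreover have "\<bar>(a (Suc d) - a d) - (b (Suc d) - b d)\<bar> \<le> (a d - a (Suc d)) + (b d - b (Suc d))"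
    using Suc.prems[of "Suc d"] by auto
  ultimately show ?case
    by (simp add: sum.cl_ivl_Suc)
qed

lemma sum_abs_diff_increments_le_max:
  fixes a b :: "nat \<Rightarrow> int"
  assumes "\<And>j. j \<in> {1..d} \<Longrightarrow> a j \<le> a (j - 1)"
    and "\<And>j. j \<in> {1..d} \<Longrightarrow> b j \<le> b (j - 1)"
    and "a d \<ge> 0" "b d \<ge> 0"
  shows "(\<Sum>j\<le>d. \<bar>(if j = 0 then a 0 else a j - a (j - 1)) - (if j = 0 then b 0 else b j - b (j - 1))\<bar>)
           \<le> 2 * max (a 0) (b 0)"
proof -
  have "(\<Sum>j\<le>d. \<bar>(if j = 0 then a 0 else a j - a (j - 1)) - (if j = 0 then b 0 else b j - b (j - 1))\<bar>)
        = \<bar>a 0 - b 0\<bar> + (\<Sum>j\<in>{1..d}. \<bar>(a j - a (j - 1)) - (b j - b (j - 1))\<bar>)"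
    by (simp add: atMost_atLeast0 sum.atLeast_Suc_atMost)
  also have "\<dots> \<le> \<bar>a 0 - b 0\<bar> + (a 0 - a d) + (b 0 - b d)"
    using sum_abs_diff_increments_antimono[of d a b, OF assms(1,2)] by linarith
  also have "\<dots> \<le> 2 * max (a 0) (b 0)"
    using assms(3,4) by (simp add: max_def)
  finally show ?thesis .
qed

theorem mainTheorem3:
  fixes P :: "nat \<Rightarrow> 'a list" and d :: nat
    and D :: "'a list multiset" and S S' :: "'a list"
  assumes nonempty: "\<And>j. j \<le> d \<Longrightarrow> P j \<noteq> []"
    and chain: "\<And>j. j \<in> {1..d} \<Longrightarrow> prefix (P (j - 1)) (P j)"
    and inD: "S \<in># D"
  shows "(\<Sum>j\<le>d. \<bar>delta D P j - delta (add_mset S' (D - {#S#})) P j\<bar>)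
           \<le> 2 * int (max (freq S (P 0)) (freq S' (P 0)))"
proof -
  define a where "a T j = int (freq T (P j))" for T j
  have delta_singleton_a: "delta {#T#} P j = (if j = 0 then a T 0 else a T j - a T (j - 1))" for T j
    by (simp add: delta_singleton a_def)
  have "(\<Sum>j\<le>d. \<bar>delta D P j - delta (add_mset S' (D - {#S#})) P j\<bar>)
        = (\<Sum>j\<le>d. \<bar>delta {#S#} P j - delta {#S'#} P j\<bar>)"
    by (simp add: delta_diff_replace[OF inD])
  also have "\<dots> \<le> 2 * max (a S 0) (a S' 0)"
    unfolding delta_singleton_a
  proof (rule sum_abs_diff_increments_le_max)
    fix j assume "j \<in> {1..d}"
    then show "a S j \<le> a S (j - 1)" "a S' j \<le> a S' (j - 1)"
      unfolding a_def using freq_antimono_prefix[OF chain[OF \<open>j \<in> {1..d}\<close>]] by simp_all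
  qed (simp_all add: a_def)
  finally show ?thesis
    by (simp add: a_def)
qed

end
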